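(* A finite-dimensional Poisson $n$-Lie algebra $\mathcal P$ is nilpotent if and only if the operators $P_x$ and $Q_y$ are nilpotent for all $x\in\mathcal P$ and all $y\in\wedge^{n-1}\mathcal P$.
   Context: A Poisson $n$-Lie algebra is a commutative associative algebra $(\mathcal P,\cdot)$ with an $n$-linear skew-symmetric bracket satisfying the fundamental identity $[x_1,\dots,x_{n-1},[y_1,\dots,y_n]]=\sum_{i=1}^n[y_1,\dots,[x_1,\dots,x_{n-1},y_i],\dots,y_n]$ and the Leibniz rule $[y\cdot z,x_2,\dots,x_n]=y\cdot[z,x_2,\dots,x_n]+z\cdot[y,x_2,\dots,x_n]$. $P_x$ is the multiplication operator $z\mapsto x\cdot z$; for $y=y_1\wedge\cdots\wedge y_{n-1}$, $Q_y$ is the operator $z\mapsto[y_1,\dots,y_{n-1},z]$, extended linearly to $\wedge^{n-1}\mathcal P$. $\mathcal P$ is nilpotent if $\mathcal P^s=0$ for some $s$, where $\mathcal P^1=\mathcal P$, $\mathcal P^{k+1}=[\mathcal P^k,\mathcal P,\dots,\mathcal P]+\mathcal P^k\cdot\mathcal P$ (linear spans). *)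

theory Defs
  imports Main "HOL.Vector_Spaces"
begin

text \<open>An n-ary bracket is a function of an argument tuple
(nat \<Rightarrow> 'v), of which only the entries 0, ..., n-1 are used.\<close>

definition nilpotent_op :: "('v::zero \<Rightarrow> 'v) \<Rightarrow> bool" where
  "nilpotent_op f \<longleftrightarrow> (\<exists>k. (f ^^ k) = (\<lambda>_. 0))"

definition poisson_nlie ::
  "('k::field \<Rightarrow> 'v::ab_group_add \<Rightarrow> 'v) \<Rightarrow> nat \<Rightarrow> ('v \<Rightarrow> 'v \<Rightarrow> 'v) \<Rightarrow> ((nat \<Rightarrow> 'v) \<Rightarrow> 'v) \<Rightarrow> bool"
where
  "poisson_nlie scale n mult br \<longleftrightarrow>
     vector_space scale \<and> n \<ge> 2 \<and>
     \<comment> \<open>commutative associative bilinear product\<close>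
     (\<forall>x. Vector_Spaces.linear scale scale (mult x)) \<and>
     (\<forall>x y. mult x y = mult y x) \<and>
     (\<forall>x y z. mult (mult x y) z = mult x (mult y z)) \<and>
     \<comment> \<open>the bracket only depends on its first n arguments\<close>
     (\<forall>f g. (\<forall>i<n. f i = g i) \<longrightarrow> br f = br g) \<and>
     \<comment> \<open>n-linearity\<close>
     (\<forall>f i. i < n \<longrightarrow> Vector_Spaces.linear scale scale (\<lambda>x. br (f(i := x)))) \<and>
     \<comment> \<open>skew-symmetry\<close>
     (\<forall>f i j. i < j \<and> j < n \<longrightarrow> br (f(i := f j, j := f i)) = - br f) \<and>
     \<comment> \<open>fundamental identity\<close>
     (\<forall>x y. br (x(n - 1 := br y)) =
              (\<Sum>i<n. br (y(i := br (x(n - 1 := y i)))))) \<and>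
     \<comment> \<open>Leibniz rule\<close>
     (\<forall>f y z. br (f(0 := mult y z)) =
              mult y (br (f(0 := z))) + mult z (br (f(0 := y))))"

primrec lower_series ::
  "('k::field \<Rightarrow> 'v::ab_group_add \<Rightarrow> 'v) \<Rightarrow> nat \<Rightarrow> ('v \<Rightarrow> 'v \<Rightarrow> 'v) \<Rightarrow> ((nat \<Rightarrow> 'v) \<Rightarrow> 'v) \<Rightarrow> nat \<Rightarrow> 'v set"
where
  "lower_series scale n mult br 0 = UNIV"
| "lower_series scale n mult br (Suc k) =
     module.span scale
       ({br (f(0 := a)) | a f. a \<in> lower_series scale n mult br k} \<union>
        {mult a b | a b. a \<in> lower_series scale n mult br k})"

text \<open>Indexing: lower_series ... k is P^(k+1).\<close>
definition pn_nilpotent ::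
  "('k::field \<Rightarrow> 'v::ab_group_add \<Rightarrow> 'v) \<Rightarrow> nat \<Rightarrow> ('v \<Rightarrow> 'v \<Rightarrow> 'v) \<Rightarrow> ((nat \<Rightarrow> 'v) \<Rightarrow> 'v) \<Rightarrow> bool"
where
  "pn_nilpotent scale n mult br \<longleftrightarrow> (\<exists>s. lower_series scale n mult br s = {0})"

end

theory Submission
  imports Defs "HOL-Library.Function_Algebras"
begin

text \<open>
  If \<open>P\<^sup>s = 0\<close>, every \<open>P\<^sub>x\<close> and every \<open>Q\<^sub>y\<close> is nilpotent, because both map
  \<open>P\<^sup>k\<close> into \<open>P\<^sup>k\<^sup>+\<^sup>1\<close>.

  Conversely, \<open>L\<^sub>P = {P\<^sub>x}\<close> is an abelian Lie algebra of nilpotent operators,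
  \<open>L\<^sub>Q = span {Q\<^sub>y}\<close> is a Lie algebra by the fundamental identity and consists of nilpotent
  operators by hypothesis, and the Leibniz rule gives \<open>[Q, P\<^sub>x] = P\<^bsub>Q x\<^esub>\<close>, so \<open>L\<^sub>Q\<close>
  normalizes \<open>L\<^sub>P\<close>. Engel's theorem in its relative form (a Lie algebra of nilpotent
  operators kills some vector of every nonzero invariant subquotient \<open>U / W\<close>), applied to
  \<open>L\<^sub>P\<close> and then to \<open>L\<^sub>Q\<close> acting on the vectors that \<open>L\<^sub>P\<close> sends into \<open>W\<close>,
  shows that \<open>V\<^sub>0 = 0\<close>, \<open>V\<^sub>j\<^sub>+\<^sub>1 = {v. T v \<in> V\<^sub>j for all T \<in> L\<^sub>P \<union> L\<^sub>Q}\<close> grows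
  strictly until it is all of \<open>P\<close>; hence \<open>V\<^sub>d = P\<close> for \<open>d = dim P\<close>. By induction
  \<open>P\<^sup>k\<^sup>+\<^sup>1 \<subseteq> V\<^bsub>d - k\<^esub>\<close>, so \<open>P\<^sup>d\<^sup>+\<^sup>1 = 0\<close>.

  Engel's theorem is proved by induction on the dimension of the Lie algebra \<open>K\<close>: some
  \<open>X \<in> K - K'\<close> normalizes a maximal proper subalgebra \<open>K'\<close> (Engel for \<open>ad K'\<close> on
  \<open>K / K'\<close>), so \<open>K = K' + span {X}\<close>; since \<open>X\<close> preserves the vectors that \<open>K'\<close> sends
  into \<open>W\<close>, iterating the nilpotent \<open>X\<close> on such a vector yields one that all of \<open>K\<close> sends
  into \<open>W\<close>.
\<close>

lemma sum_fun_apply: "(\<Sum>i\<in>I. f i) x = (\<Sum>i\<in>I. f i x)"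
  by (induct I rule: infinite_finite_induct) auto

lemma funpow_enters:
  assumes "P ((f ^^ m) u)" and "\<not> P u"
  shows "\<exists>j. \<not> P ((f ^^ j) u) \<and> P (f ((f ^^ j) u))"
  using assms
proof (induct m)
  case (Suc m)
  then show ?case by (cases "P ((f ^^ m) u)") auto
qed simp

lemma (in vector_space) dim_psubset_of_finite_span:
  assumes "subspace S" and "S \<subset> T" and "T \<subseteq> span E" and "finite E"
  shows "dim S < dim T"
proof -
  obtain B where B: "B \<subseteq> S" "independent B" "S \<subseteq> span B" "card B = dim S"
    using basis_exists[of S] by metis
  obtain C where C: "C \<subseteq> T" "independent C" "T \<subseteq> span C" "card C = dim T"
    using basis_exists[of T] by metis
  obtain t where t: "t \<in> T" "t \<notin> S" using assms(2) by blast
  have "t \<notin> span B" using t span_minimal[OF B(1) assms(1)] by blast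
  then have indep: "independent (insert t B)" using B(2) by (rule independent_insertI)
  have "finite C" using independent_span_bound[OF assms(4) C(2)] C(1) assms(3) by blast
  moreover have "insert t B \<subseteq> span C" using t B(1) assms(2) C(3) by blast
  ultimately have "card (insert t B) \<le> card C" using independent_span_bound indep by blast
  moreover have "finite B" using independent_span_bound[OF assms(4) B(2)] B(1) assms(2,3) by blast
  ultimately show ?thesis using t B(1,4) C(4) by (simp add: subset_iff) (metis card_insert_disjoint Suc_le_eq)
qed

lemma (in finite_dimensional_vector_space) increasing_subspaces_reach_UNIV:
  assumes "\<And>j. subspace (V j)" and "\<And>j. V j \<subseteq> V (Suc j)"
    and "\<And>j. V j \<noteq> UNIV \<Longrightarrow> V j \<noteq> V (Suc j)"
  shows "V dimension = UNIV"
proof (rule ccontr)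
  have span_V: "span (V j) = V j" for j using assms(1) by simp
  have growth: "V j = UNIV \<or> j \<le> dim (V j)" for j
  proof (induct j)
    case (Suc j)
    show ?case
    proof (cases "V j = UNIV")
      case True
      then show ?thesis using assms(2)[of j] by auto
    next
      case False
      then have "V j \<subset> V (Suc j)" using assms(2,3) by blast
      then have "dim (V j) < dim (V (Suc j))" using dim_psubset[of "V j" "V (Suc j)"] by (simp add: span_V)
      then show ?thesis using Suc False by auto
    qed
  qed simp
  assume "V dimension \<noteq> UNIV"
  then have "dim (V dimension) = dimension"
    using growth[of dimension] dim_subset_UNIV[of "V dimension"] by simp
  then show False using dim_eq_full \<open>V dimension \<noteq> UNIV\<close> by (simp add: span_V)
qed

section \<open>Linear operators on a finite-dimensional space\<close>

locale endo_space = finite_dimensional_vector_space scale Basis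
  for scale :: "'k::field \<Rightarrow> 'v::ab_group_add \<Rightarrow> 'v" and Basis :: "'v set"
begin

definition fscale :: "'k \<Rightarrow> ('v \<Rightarrow> 'v) \<Rightarrow> 'v \<Rightarrow> 'v" where
  "fscale c f = (\<lambda>x. scale c (f x))"

definition End :: "('v \<Rightarrow> 'v) set" where
  "End = {f. Vector_Spaces.linear scale scale f}"

definition commutator :: "('v \<Rightarrow> 'v) \<Rightarrow> ('v \<Rightarrow> 'v) \<Rightarrow> 'v \<Rightarrow> 'v" where
  "commutator A B = (\<lambda>x. A (B x) - B (A x))"

lemma fscale_apply: "fscale c f x = scale c (f x)"
  by (simp add: fscale_def)

lemma commutator_apply: "commutator A B x = A (B x) - B (A x)"
  by (simp add: commutator_def)

sublocale F: vector_space fscale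
  by unfold_locales (simp_all add: fun_eq_iff fscale_apply scale_right_distrib scale_left_distrib)

lemma End_iff: "f \<in> End \<longleftrightarrow> (\<forall>x y. f (x + y) = f x + f y) \<and> (\<forall>c x. f (scale c x) = scale c (f x))"
  unfolding End_def linear_iff using vector_space_axioms by auto

lemma End_add: "f \<in> End \<Longrightarrow> f (x + y) = f x + f y"
  and End_scale: "f \<in> End \<Longrightarrow> f (scale c x) = scale c (f x)"
  by (simp_all add: End_iff)

lemma End_0: "f \<in> End \<Longrightarrow> f 0 = 0"
  using End_scale[of f 0 0] by simp

lemma End_diff: "f \<in> End \<Longrightarrow> f (x - y) = f x - f y"
  using End_add[of f "x - y" y] by (simp add: eq_diff_eq)

lemma End_neg: "f \<in> End \<Longrightarrow> f (- x) = - f x"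
  using End_diff[of f 0 x] End_0[of f] by simp

lemma End_sum: "f \<in> End \<Longrightarrow> f (\<Sum>i\<in>I. g i) = (\<Sum>i\<in>I. f (g i))"
  by (induct I rule: infinite_finite_induct) (auto simp: End_0 End_add)

lemma End_funpow: "f \<in> End \<Longrightarrow> f ^^ k \<in> End"
  by (induct k) (auto simp: End_iff)

lemma subspace_End: "F.subspace End"
  by (auto simp: F.subspace_def End_iff fscale_apply scale_right_distrib add_ac mult.commute)

lemma End_finite_span: "\<exists>E. finite E \<and> End \<subseteq> F.span E"
proof -
  define coord where "coord b x = representation Basis x b" for b x
  have expand: "(\<Sum>b\<in>Basis. scale (coord b x) b) = x" for x
    unfolding coord_def using sum_representation_eq[OF independent_Basis] span_Basis finite_Basis by simp
  define E where "E = (\<lambda>(b, w). \<lambda>x. scale (coord b x) w) ` (Basis \<times> Basis)"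
  have "f \<in> F.span E" if f: "f \<in> End" for f
  proof -
    have "f x = (\<Sum>b\<in>Basis. \<Sum>w\<in>Basis. fscale (coord w (f b)) (\<lambda>x. scale (coord b x) w)) x" for x
    proof -
      have "f x = f (\<Sum>b\<in>Basis. scale (coord b x) b)" by (simp add: expand)
      also have "\<dots> = (\<Sum>b\<in>Basis. scale (coord b x) (f b))"
        by (simp add: End_sum[OF f] End_scale[OF f])
      also have "\<dots> = (\<Sum>b\<in>Basis. scale (coord b x) (\<Sum>w\<in>Basis. scale (coord w (f b)) w))"
        by (simp add: expand)
      finally show ?thesis by (simp add: sum_fun_apply fscale_apply scale_sum_right mult.commute)
    qed
    then have "f = (\<Sum>b\<in>Basis. \<Sum>w\<in>Basis. fscale (coord w (f b)) (\<lambda>x. scale (coord b x) w))"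
      by (rule ext)
    also have "\<dots> \<in> F.span E"
      by (intro F.span_sum F.span_scale F.span_base) (auto simp: E_def)
    finally show ?thesis .
  qed
  then show ?thesis using finite_Basis by (intro exI[of _ E]) (auto simp: E_def)
qed

lemma dim_psubset_End:
  assumes "F.subspace K'" and "K' \<subset> K" and "K \<subseteq> End"
  shows "F.dim K' < F.dim K"
proof -
  obtain E where "finite E" "End \<subseteq> F.span E" using End_finite_span by blast
  then show ?thesis using F.dim_psubset_of_finite_span[OF assms(1,2)] assms(3) by blast
qed

lemma commutator_add_left: "B \<in> End \<Longrightarrow> commutator (A1 + A2) B = commutator A1 B + commutator A2 B"
  and commutator_add_right: "A \<in> End \<Longrightarrow> commutator A (B1 + B2) = commutator A B1 + commutator A B2"
  by (simp_all add: fun_eq_iff commutator_apply End_add)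

lemma commutator_scale_left: "B \<in> End \<Longrightarrow> commutator (fscale c A) B = fscale c (commutator A B)"
  and commutator_scale_right: "A \<in> End \<Longrightarrow> commutator A (fscale c B) = fscale c (commutator A B)"
  by (simp_all add: fun_eq_iff commutator_apply fscale_apply End_scale scale_right_diff_distrib)

lemma commutator_zero_left: "B \<in> End \<Longrightarrow> commutator 0 B = 0"
  and commutator_zero_right: "A \<in> End \<Longrightarrow> commutator A 0 = 0"
  by (simp_all add: fun_eq_iff commutator_apply End_0)

lemma commutator_swap: "commutator A B = - commutator B A"
  by (simp add: fun_eq_iff commutator_apply)

lemma subspace_commutator_left_vimage:
  "B \<in> End \<Longrightarrow> F.subspace T \<Longrightarrow> F.subspace {A. commutator A B \<in> T}"
  by (simp add: F.subspace_def commutator_zero_left commutator_add_left commutator_scale_left)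

lemma subspace_commutator_right_vimage:
  "A \<in> End \<Longrightarrow> F.subspace T \<Longrightarrow> F.subspace {B. commutator A B \<in> T}"
  by (simp add: F.subspace_def commutator_zero_right commutator_add_right commutator_scale_right)

lemma commutator_funpow_in_span:
  assumes "A \<in> End"
  shows "(commutator A ^^ m) X \<in> F.span {(\<lambda>z. (A ^^ i) (X ((A ^^ j) z))) | i j. i + j = m}"
proof (induct m)
  case 0
  have "X \<in> {(\<lambda>z. (A ^^ i) (X ((A ^^ j) z))) | i j. i + j = 0}" by (intro CollectI exI[of _ 0]) simp
  then show ?case by (simp add: F.span_base)
next
  case (Suc m)
  let ?S = "{(\<lambda>z. (A ^^ i) (X ((A ^^ j) z))) | i j. i + j = Suc m}"
  have "commutator A Y \<in> F.span ?S" if Y_in: "Y \<in> {(\<lambda>z. (A ^^ i) (X ((A ^^ j) z))) | i j. i + j = m}" for Y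
  proof -
    obtain i j where Y: "Y = (\<lambda>z. (A ^^ i) (X ((A ^^ j) z)))" "i + j = m" using Y_in by blast
    have "commutator A Y = (\<lambda>z. (A ^^ Suc i) (X ((A ^^ j) z))) - (\<lambda>z. (A ^^ i) (X ((A ^^ Suc j) z)))"
      by (simp add: Y fun_eq_iff commutator_apply funpow_swap1)
    moreover have "(\<lambda>z. (A ^^ Suc i) (X ((A ^^ j) z))) \<in> ?S"
      using Y(2) by (intro CollectI exI[of _ "Suc i"] exI[of _ j]) simp
    moreover have "(\<lambda>z. (A ^^ i) (X ((A ^^ Suc j) z))) \<in> ?S"
      using Y(2) by (intro CollectI exI[of _ i] exI[of _ "Suc j"]) simp
    ultimately show ?thesis by (simp add: F.span_diff F.span_base)
  qed
  then have "commutator A ((commutator A ^^ m) X) \<in> F.span ?S"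
    using F.span_induct[OF Suc, where P = "\<lambda>Y. commutator A Y \<in> F.span ?S"]
      subspace_commutator_right_vimage[OF assms F.subspace_span] by blast
  then show ?case by simp
qed

lemma commutator_locally_nilpotent:
  assumes A: "A \<in> End" "nilpotent_op A" and X: "X \<in> End"
  shows "\<exists>m. (commutator A ^^ m) X = 0"
proof -
  obtain k where k: "A ^^ k = 0" using A(2) by (auto simp: nilpotent_op_def zero_fun_def)
  have vanish: "(A ^^ l) y = 0" if "k \<le> l" for l y
  proof -
    have "A ^^ l = A ^^ (l - k) \<circ> A ^^ k" using that by (simp add: funpow_add[symmetric])
    then show ?thesis using k End_0[OF End_funpow[OF A(1)]] by simp
  qed
  have "Y = 0" if Y_in: "Y \<in> {(\<lambda>z. (A ^^ i) (X ((A ^^ j) z))) | i j. i + j = 2 * k}" for Y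
  proof -
    obtain i j where Y: "Y = (\<lambda>z. (A ^^ i) (X ((A ^^ j) z)))" "i + j = 2 * k" using Y_in by blast
    show ?thesis
    proof (cases "k \<le> i")
      case True
      then show ?thesis by (simp add: Y vanish fun_eq_iff)
    next
      case False
      then have "k \<le> j" using Y(2) by simp
      then show ?thesis by (simp add: Y vanish End_0[OF X] End_0[OF End_funpow[OF A(1)]] fun_eq_iff)
    qed
  qed
  then have "F.span {(\<lambda>z. (A ^^ i) (X ((A ^^ j) z))) | i j. i + j = 2 * k} \<subseteq> {0}"
    using F.span_minimal[OF _ F.subspace_single_0] by blast
  then show ?thesis using commutator_funpow_in_span[OF A(1), of "2 * k" X] by blast
qed

definition lie_subalgebra :: "('v \<Rightarrow> 'v) set \<Rightarrow> bool" where
  "lie_subalgebra K \<longleftrightarrow> K \<subseteq> End \<and> F.subspace K \<and> (\<forall>A\<in>K. \<forall>B\<in>K. commutator A B \<in> K)"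

lemma lie_subalgebra_span:
  assumes G: "G \<subseteq> End" and closed: "\<And>A B. A \<in> G \<Longrightarrow> B \<in> G \<Longrightarrow> commutator A B \<in> F.span G"
  shows "lie_subalgebra (F.span G)"
proof -
  have span_End: "F.span G \<subseteq> End" using F.span_minimal[OF G subspace_End] .
  have left: "commutator A B \<in> F.span G" if "A \<in> F.span G" "B \<in> G" for A B
    using F.span_induct[OF that(1) subspace_commutator_left_vimage] G closed that(2) by blast
  have "commutator A B \<in> F.span G" if "A \<in> F.span G" "B \<in> F.span G" for A B
    using F.span_induct[OF that(2) subspace_commutator_right_vimage] span_End left that(1) by blast
  then show ?thesis using span_End by (simp add: lie_subalgebra_def)
qed

lemma lie_subalgebra_span_insert:
  assumes K: "lie_subalgebra K" and X: "X \<in> End" and normalizes: "\<And>A. A \<in> K \<Longrightarrow> commutator A X \<in> K"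
  shows "lie_subalgebra (F.span (insert X K))"
proof (rule lie_subalgebra_span)
  show "insert X K \<subseteq> End" using K X by (simp add: lie_subalgebra_def)
  fix A B assume "A \<in> insert X K" "B \<in> insert X K"
  then consider "commutator A B \<in> K" | "commutator B A \<in> K" | "A = B"
    using K normalizes by (auto simp: lie_subalgebra_def)
  then show "commutator A B \<in> F.span (insert X K)"
  proof cases
    case 1
    then show ?thesis by (intro F.span_base insertI2)
  next
    case 2
    have "commutator A B = - commutator B A" by (simp add: fun_eq_iff commutator_apply)
    then show ?thesis using F.span_neg[OF F.span_base[OF insertI2[OF 2]]] by simp
  next
    case 3
    then have "commutator A B = 0" by (simp add: fun_eq_iff commutator_apply)
    then show ?thesis by (simp add: F.span_zero)
  qed
qed

lemma ex_maximal_proper_lie_subalgebra: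
  assumes K: "lie_subalgebra K" "K \<noteq> {0}"
  obtains K' where "lie_subalgebra K'" "K' \<subset> K"
    "\<And>K''. lie_subalgebra K'' \<Longrightarrow> K' \<subset> K'' \<Longrightarrow> K'' \<subseteq> K \<Longrightarrow> K'' = K"
proof -
  define P where "P = {K'. lie_subalgebra K' \<and> K' \<subset> K}"
  have K_End: "K \<subseteq> End" and "F.subspace K" using K(1) by (simp_all add: lie_subalgebra_def)
  then have "{0} \<subset> K" using K(2) F.subspace_0 by blast
  moreover have "lie_subalgebra {0}"
    using F.subspace_0[OF subspace_End] by (simp add: lie_subalgebra_def commutator_zero_left)
  ultimately have "{0} \<in> P" by (simp add: P_def)
  have "F.dim K' < F.dim K" if "K' \<in> P" for K'
    using that dim_psubset_End[OF _ _ K_End] by (simp add: P_def lie_subalgebra_def)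
  then have fin: "finite (F.dim ` P)"
    by (meson finite_lessThan finite_subset image_subsetI lessThan_iff)
  have "Max (F.dim ` P) \<in> F.dim ` P" using Max_in[OF fin] \<open>{0} \<in> P\<close> by blast
  then obtain K' where K': "K' \<in> P" "F.dim K' = Max (F.dim ` P)" by (rule imageE) simp
  show ?thesis
  proof (rule that)
    show "lie_subalgebra K'" "K' \<subset> K" using K'(1) by (simp_all add: P_def)
    fix K'' assume K'': "lie_subalgebra K''" "K' \<subset> K''" "K'' \<subseteq> K"
    show "K'' = K"
    proof (rule ccontr)
      assume "K'' \<noteq> K"
      then have "K'' \<in> P" using K'' by (simp add: P_def psubset_eq)
      then have "F.dim K'' \<le> F.dim K'" using Max_ge[OF fin] K'(2) by simp
      moreover have "F.dim K' < F.dim K''"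
        using K'(1) K''(1,2) dim_psubset_End by (simp add: P_def lie_subalgebra_def)
      ultimately show False by simp
    qed
  qed
qed

end

section \<open>Engel's theorem\<close>

text \<open>The induction proving Engel's theorem needs two instances
  at once: the natural action \<open>EV\<close> and the adjoint action \<open>AD\<close> on \<open>End\<close>.\<close>
locale endo_rep = endo_space scale Basis + M: vector_space sc
  for scale :: "'k::field \<Rightarrow> 'v::ab_group_add \<Rightarrow> 'v" and Basis :: "'v set"
    and sc :: "'k \<Rightarrow> 'a::ab_group_add \<Rightarrow> 'a" +
  fixes act :: "('v \<Rightarrow> 'v) \<Rightarrow> 'a \<Rightarrow> 'a" and D :: "'a set"
  assumes act_add: "A \<in> End \<Longrightarrow> x \<in> D \<Longrightarrow> y \<in> D \<Longrightarrow> act A (x + y) = act A x + act A y"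
    and act_scale: "A \<in> End \<Longrightarrow> x \<in> D \<Longrightarrow> act A (sc c x) = sc c (act A x)"
    and act_add_left: "A \<in> End \<Longrightarrow> B \<in> End \<Longrightarrow> x \<in> D \<Longrightarrow> act (A + B) x = act A x + act B x"
    and act_scale_left: "A \<in> End \<Longrightarrow> x \<in> D \<Longrightarrow> act (fscale c A) x = sc c (act A x)"
    and act_commutator: "A \<in> End \<Longrightarrow> B \<in> End \<Longrightarrow> x \<in> D \<Longrightarrow>
      act (commutator A B) x = act A (act B x) - act B (act A x)"
    and act_nilpotent: "A \<in> End \<Longrightarrow> nilpotent_op A \<Longrightarrow> x \<in> D \<Longrightarrow> \<exists>m. (act A ^^ m) x = 0"
begin

lemma act_zero_left: "x \<in> D \<Longrightarrow> act 0 x = 0"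
  using act_scale_left[OF F.subspace_0[OF subspace_End], of x 0] by (simp add: fun_eq_iff fscale_apply)

lemma act_zero: "A \<in> End \<Longrightarrow> 0 \<in> D \<Longrightarrow> act A 0 = 0"
  using act_scale[of A 0 0] by simp

definition engel_property :: "('v \<Rightarrow> 'v) set \<Rightarrow> bool" where
  "engel_property K \<longleftrightarrow> (\<forall>U W. M.subspace U \<longrightarrow> M.subspace W \<longrightarrow> W \<subset> U \<longrightarrow> U \<subseteq> D \<longrightarrow>
     (\<forall>A\<in>K. act A ` U \<subseteq> U \<and> act A ` W \<subseteq> W) \<longrightarrow> (\<exists>u\<in>U - W. \<forall>A\<in>K. act A u \<in> W))"

lemma engel_propertyD:
  assumes "engel_property K" and "M.subspace U" "M.subspace W" "W \<subset> U" "U \<subseteq> D"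
    and "\<And>A x. A \<in> K \<Longrightarrow> x \<in> U \<Longrightarrow> act A x \<in> U" and "\<And>A x. A \<in> K \<Longrightarrow> x \<in> W \<Longrightarrow> act A x \<in> W"
  shows "\<exists>u\<in>U - W. \<forall>A\<in>K. act A u \<in> W"
proof -
  have "\<forall>A\<in>K. act A ` U \<subseteq> U \<and> act A ` W \<subseteq> W" using assms(6,7) by blast
  then show ?thesis using assms(1-5) unfolding engel_property_def by blast
qed

lemma engel_property_empty: "engel_property {}"
  unfolding engel_property_def by blast

lemma subspace_killing_operators:
  assumes "x \<in> D" and "M.subspace W"
  shows "F.subspace {A \<in> End. act A x \<in> W}"
  unfolding F.subspace_def
proof (intro conjI ballI allI)
  show "0 \<in> {A \<in> End. act A x \<in> W}"
    using assms act_zero_left F.subspace_0[OF subspace_End] M.subspace_0 by simp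
  fix A B c assume A: "A \<in> {A \<in> End. act A x \<in> W}" and B: "B \<in> {A \<in> End. act A x \<in> W}"
  then show "A + B \<in> {A \<in> End. act A x \<in> W}"
    using assms act_add_left F.subspace_add[OF subspace_End] M.subspace_add by simp
  show "fscale c A \<in> {A \<in> End. act A x \<in> W}"
    using A assms act_scale_left F.subspace_scale[OF subspace_End] M.subspace_scale by simp
qed

lemma engel_property_span:
  assumes K: "K \<subseteq> End" and engel: "engel_property K"
  shows "engel_property (F.span K)"
  unfolding engel_property_def
proof (intro allI impI)
  fix U W assume UW: "M.subspace U" "M.subspace W" "W \<subset> U" "U \<subseteq> D"
    and inv: "\<forall>A\<in>F.span K. act A ` U \<subseteq> U \<and> act A ` W \<subseteq> W"
  have inv_U: "act A x \<in> U" if "A \<in> K" "x \<in> U" for A x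
    using inv F.span_base[OF \<open>A \<in> K\<close>] \<open>x \<in> U\<close> by blast
  have inv_W: "act A x \<in> W" if "A \<in> K" "x \<in> W" for A x
    using inv F.span_base[OF \<open>A \<in> K\<close>] \<open>x \<in> W\<close> by blast
  obtain u where u: "u \<in> U" "u \<notin> W" and killed: "\<And>A. A \<in> K \<Longrightarrow> act A u \<in> W"
    using engel_propertyD[OF engel UW inv_U inv_W] by blast
  have "A \<in> {A \<in> End. act A u \<in> W}" if "A \<in> F.span K" for A
    using F.span_induct[OF that subspace_killing_operators] u UW K killed by blast
  then show "\<exists>u\<in>U - W. \<forall>A\<in>F.span K. act A u \<in> W" using u by blast
qed

lemma engel_property_single:
  assumes "X \<in> End" and "nilpotent_op X"
  shows "engel_property {X}"
  unfolding engel_property_def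
proof (intro allI impI)
  fix U W assume UW: "M.subspace U" "M.subspace W" "W \<subset> U" "U \<subseteq> D"
    and inv: "\<forall>A\<in>{X}. act A ` U \<subseteq> U \<and> act A ` W \<subseteq> W"
  obtain u where u: "u \<in> U" "u \<notin> W" using UW(3) by blast
  obtain m where "(act X ^^ m) u = 0" using act_nilpotent assms u UW(4) by blast
  then have "(act X ^^ m) u \<in> W" using M.subspace_0[OF UW(2)] by simp
  then obtain j where j: "(act X ^^ j) u \<notin> W" "act X ((act X ^^ j) u) \<in> W"
    using funpow_enters[where P = "\<lambda>v. v \<in> W"] u(2) by blast
  have "(act X ^^ i) u \<in> U" for i using inv u(1) by (induct i) auto
  then show "\<exists>u\<in>U - W. \<forall>A\<in>{X}. act A u \<in> W" using j by blast
qed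

lemma subspace_killed_vectors:
  assumes "K \<subseteq> End" and "M.subspace U" "U \<subseteq> D" and "M.subspace W"
  shows "M.subspace {u \<in> U. \<forall>A\<in>K. act A u \<in> W}"
  unfolding M.subspace_def
proof (intro conjI ballI allI)
  have "0 \<in> U" using M.subspace_0[OF assms(2)] .
  then have "act A 0 \<in> W" if "A \<in> K" for A
    using that assms(1,3) act_zero M.subspace_0[OF assms(4)] by (simp add: subset_iff)
  then show "0 \<in> {u \<in> U. \<forall>A\<in>K. act A u \<in> W}" using \<open>0 \<in> U\<close> by blast
  fix x y c assume x: "x \<in> {u \<in> U. \<forall>A\<in>K. act A u \<in> W}" and y: "y \<in> {u \<in> U. \<forall>A\<in>K. act A u \<in> W}"
  then have "x \<in> D" "y \<in> D" using assms(3) by blast+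
  have "act A (x + y) \<in> W" if "A \<in> K" for A
    using x y that assms(1) act_add[OF _ \<open>x \<in> D\<close> \<open>y \<in> D\<close>] M.subspace_add[OF assms(4)] by auto
  then show "x + y \<in> {u \<in> U. \<forall>A\<in>K. act A u \<in> W}"
    using x y M.subspace_add[OF assms(2)] by blast
  have "act A (sc c x) \<in> W" if "A \<in> K" for A
    using x that assms(1) act_scale[OF _ \<open>x \<in> D\<close>] M.subspace_scale[OF assms(4)] by auto
  then show "sc c x \<in> {u \<in> U. \<forall>A\<in>K. act A u \<in> W}"
    using x M.subspace_scale[OF assms(2)] by blast
qed

lemma engel_property_union:
  assumes K1: "K1 \<subseteq> End" and K2: "K2 \<subseteq> End" and engel: "engel_property K1" "engel_property K2"
    and normalizes: "\<And>A B. A \<in> K1 \<Longrightarrow> B \<in> K2 \<Longrightarrow> commutator B A \<in> K1"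
  shows "engel_property (K1 \<union> K2)"
  unfolding engel_property_def
proof (intro allI impI)
  fix U W assume UW: "M.subspace U" "M.subspace W" "W \<subset> U" "U \<subseteq> D"
    and inv: "\<forall>A\<in>K1 \<union> K2. act A ` U \<subseteq> U \<and> act A ` W \<subseteq> W"
  have inv_U: "act A x \<in> U" if "A \<in> K1 \<union> K2" "x \<in> U" for A x using inv that by blast
  have inv_W: "act A x \<in> W" if "A \<in> K1 \<union> K2" "x \<in> W" for A x using inv that by blast
  define U1 where "U1 = {u \<in> U. \<forall>A\<in>K1. act A u \<in> W}"
  have "M.subspace U1" unfolding U1_def using subspace_killed_vectors[OF K1 UW(1,4,2)] .
  have "W \<subseteq> U1" using UW(3) inv_W unfolding U1_def by blast
  moreover have "\<exists>u\<in>U - W. \<forall>A\<in>K1. act A u \<in> W"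
    using engel_propertyD[OF engel(1) UW inv_U[OF UnI1] inv_W[OF UnI1]] .
  ultimately have "W \<subset> U1" unfolding U1_def by blast
  have inv_U1: "act B u \<in> U1" if B: "B \<in> K2" and u: "u \<in> U1" for B u
  proof -
    have u_U: "u \<in> U" and killed: "\<And>A. A \<in> K1 \<Longrightarrow> act A u \<in> W" using u unfolding U1_def by blast+
    have "act A (act B u) \<in> W" if A: "A \<in> K1" for A
    proof -
      have "B \<in> End" "A \<in> End" "u \<in> D" using B A K1 K2 u_U UW(4) by blast+
      then have "act (commutator B A) u = act B (act A u) - act A (act B u)"
        by (rule act_commutator)
      then have "act A (act B u) = act B (act A u) - act (commutator B A) u" by simp
      moreover have "act B (act A u) \<in> W" using inv_W B killed[OF A] by blast
      moreover have "act (commutator B A) u \<in> W" using killed normalizes A B by blast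
      ultimately show ?thesis using M.subspace_diff[OF UW(2)] by simp
    qed
    then show ?thesis using inv_U B u_U unfolding U1_def by blast
  qed
  have "U1 \<subseteq> D" using UW(4) unfolding U1_def by blast
  have "\<exists>v\<in>U1 - W. \<forall>B\<in>K2. act B v \<in> W"
    using engel_propertyD[OF engel(2) \<open>M.subspace U1\<close> UW(2) \<open>W \<subset> U1\<close> \<open>U1 \<subseteq> D\<close> inv_U1 inv_W[OF UnI2]] .
  then show "\<exists>u\<in>U - W. \<forall>A\<in>K1 \<union> K2. act A u \<in> W" unfolding U1_def by blast
qed

lemma engel_property_span_insert:
  assumes K: "lie_subalgebra K" "engel_property K"
    and X: "X \<in> End" "nilpotent_op X" and normalizes: "\<And>A. A \<in> K \<Longrightarrow> commutator A X \<in> K"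
  shows "engel_property (F.span (insert X K))"
proof -
  have K_End: "K \<subseteq> End" and "F.subspace K" using K(1) by (simp_all add: lie_subalgebra_def)
  have "commutator X A \<in> K" if "A \<in> K" for A
    using F.subspace_neg[OF \<open>F.subspace K\<close> normalizes[OF that]] unfolding commutator_swap[of X A] .
  then have "\<And>A B. A \<in> K \<Longrightarrow> B \<in> {X} \<Longrightarrow> commutator B A \<in> K" by blast
  moreover have "{X} \<subseteq> End" using X(1) by blast
  ultimately have "engel_property (K \<union> {X})"
    using engel_property_union[OF K_End _ K(2) engel_property_single[OF X]] by blast
  moreover have "K \<union> {X} \<subseteq> End" using K_End X(1) by blast
  ultimately have "engel_property (F.span (K \<union> {X}))" by (rule engel_property_span[rotated])
  then show ?thesis by simp
qed

end

context endo_space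
begin

sublocale EV: endo_rep scale Basis scale "\<lambda>A x. A x" UNIV
proof unfold_locales
  fix A x assume "nilpotent_op A"
  then obtain k where "A ^^ k = (\<lambda>_. 0)" unfolding nilpotent_op_def by blast
  then show "\<exists>m. (A ^^ m) x = 0" by (intro exI[of _ k]) simp
qed (simp_all add: End_add End_scale fscale_apply commutator_apply)

sublocale AD: endo_rep scale Basis fscale commutator End
proof unfold_locales
  fix A B X assume "A \<in> End" "B \<in> End" "X \<in> End"
  then show "commutator (commutator A B) X = commutator A (commutator B X) - commutator B (commutator A X)"
    by (simp add: fun_eq_iff commutator_apply End_diff)
next
  fix A X assume "A \<in> End" "nilpotent_op A" "X \<in> End"
  then show "\<exists>m. (commutator A ^^ m) X = 0" by (rule commutator_locally_nilpotent)
qed (simp_all add: commutator_add_left commutator_add_right commutator_scale_left commutator_scale_right)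

lemma engel_step:
  assumes K: "lie_subalgebra K" "\<forall>A\<in>K. nilpotent_op A" "K \<noteq> {0}"
    and IH: "\<And>K'. lie_subalgebra K' \<Longrightarrow> K' \<subset> K \<Longrightarrow> EV.engel_property K' \<and> AD.engel_property K'"
  shows "EV.engel_property K \<and> AD.engel_property K"
proof -
  have K_End: "K \<subseteq> End" and "F.subspace K" and K_closed: "\<And>A B. A \<in> K \<Longrightarrow> B \<in> K \<Longrightarrow> commutator A B \<in> K"
    using K(1) by (simp_all add: lie_subalgebra_def)
  obtain K' where K': "lie_subalgebra K'" "K' \<subset> K"
    and maximal: "\<And>K''. lie_subalgebra K'' \<Longrightarrow> K' \<subset> K'' \<Longrightarrow> K'' \<subseteq> K \<Longrightarrow> K'' = K"
    using ex_maximal_proper_lie_subalgebra K(1,3) by blast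
  have K'_closed: "\<And>A B. A \<in> K' \<Longrightarrow> B \<in> K' \<Longrightarrow> commutator A B \<in> K'" and "F.subspace K'"
    using K'(1) by (simp_all add: lie_subalgebra_def)
  have engel_K': "EV.engel_property K'" "AD.engel_property K'" using IH[OF K'] by simp_all
  have "commutator A B \<in> K" if "A \<in> K'" "B \<in> K" for A B
    using K_closed K'(2) that by blast
  then obtain X where X: "X \<in> K" "X \<notin> K'" and normalizes: "\<And>A. A \<in> K' \<Longrightarrow> commutator A X \<in> K'"
    using AD.engel_propertyD[OF engel_K'(2) \<open>F.subspace K\<close> \<open>F.subspace K'\<close> K'(2) K_End _ K'_closed]
    by blast
  have X_End: "X \<in> End" and X_nil: "nilpotent_op X" using X(1) K_End K(2) by blast+
  have "F.span (insert X K') = K"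
  proof (rule maximal)
    show "lie_subalgebra (F.span (insert X K'))"
      using lie_subalgebra_span_insert[OF K'(1) X_End normalizes] .
    show "K' \<subset> F.span (insert X K')"
      using X(2) F.span_superset[of "insert X K'"] by blast
    show "F.span (insert X K') \<subseteq> K"
      using F.span_minimal[OF _ \<open>F.subspace K\<close>] X(1) K'(2) by blast
  qed
  then show ?thesis
    using EV.engel_property_span_insert[OF K'(1) engel_K'(1) X_End X_nil normalizes]
      AD.engel_property_span_insert[OF K'(1) engel_K'(2) X_End X_nil normalizes] by simp
qed

theorem engel:
  assumes "lie_subalgebra K" and "\<forall>A\<in>K. nilpotent_op A"
  shows "EV.engel_property K \<and> AD.engel_property K"
  using assms
proof (induct "F.dim K" arbitrary: K rule: less_induct)
  case less
  show ?case
  proof (cases "K = {0}")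
    case True
    then have "K = F.span {}" by simp
    then show ?thesis
      using EV.engel_property_span[OF _ EV.engel_property_empty]
        AD.engel_property_span[OF _ AD.engel_property_empty] by simp
  next
    case False
    have "EV.engel_property K' \<and> AD.engel_property K'" if "lie_subalgebra K'" "K' \<subset> K" for K'
    proof (rule less.hyps)
      show "F.dim K' < F.dim K"
        using dim_psubset_End that less.prems(1) by (simp add: lie_subalgebra_def)
      show "\<forall>A\<in>K'. nilpotent_op A" using less.prems(2) that(2) by blast
    qed (fact that(1))
    then show ?thesis using engel_step less.prems False by blast
  qed
qed

end

primrec upper_series :: "('v \<Rightarrow> 'v) set \<Rightarrow> nat \<Rightarrow> 'v::zero set" where
  "upper_series S 0 = {0}"
| "upper_series S (Suc j) = {v. \<forall>T\<in>S. T v \<in> upper_series S j}"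

context endo_space
begin

lemma upper_series_mono: "S \<subseteq> End \<Longrightarrow> upper_series S j \<subseteq> upper_series S (Suc j)"
proof (induct j)
  case 0
  then show ?case by (auto simp: End_0)
qed auto

lemma upper_series_invariant: "S \<subseteq> End \<Longrightarrow> T \<in> S \<Longrightarrow> v \<in> upper_series S j \<Longrightarrow> T v \<in> upper_series S j"
  using upper_series_mono[of S j] by (cases j) (auto simp: End_0)

lemma subspace_upper_series: "S \<subseteq> End \<Longrightarrow> subspace (upper_series S j)"
proof (induct j)
  case (Suc j)
  then have V: "subspace (upper_series S j)" and S: "S \<subseteq> End" by simp_all
  have "T 0 \<in> upper_series S j" if "T \<in> S" for T
    using that S End_0[of T] subspace_0[OF V] by auto
  moreover have "T (x + y) \<in> upper_series S j"
    if "T \<in> S" "T x \<in> upper_series S j" "T y \<in> upper_series S j" for T x y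
    using that S End_add[of T x y] subspace_add[OF V] by auto
  moreover have "T (scale c x) \<in> upper_series S j" if "T \<in> S" "T x \<in> upper_series S j" for T c x
    using that S End_scale[of T c x] subspace_scale[OF V] by auto
  ultimately show ?case by (simp add: subspace_def)
qed simp

lemma upper_series_eq_UNIV:
  assumes S: "S \<subseteq> End" and engel: "EV.engel_property S"
  shows "upper_series S dimension = UNIV"
proof (rule increasing_subspaces_reach_UNIV)
  show "subspace (upper_series S j)" "upper_series S j \<subseteq> upper_series S (Suc j)" for j
    using subspace_upper_series[OF S] upper_series_mono[OF S] by blast+
  fix j assume "upper_series S j \<noteq> UNIV"
  then have "upper_series S j \<subset> UNIV" by blast
  then have "\<exists>v\<in>UNIV - upper_series S j. \<forall>T\<in>S. T v \<in> upper_series S j"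
    using EV.engel_propertyD[where K = S and U = UNIV and W = "upper_series S j"]
      engel subspace_upper_series[OF S] upper_series_invariant[OF S] by simp
  then show "upper_series S j \<noteq> upper_series S (Suc j)" by auto
qed

end

section \<open>Poisson n-Lie algebras\<close>

lemma nilpotent_op_if_shifts_lower_series:
  assumes "pn_nilpotent scale n mult br"
    and "\<And>k a. a \<in> lower_series scale n mult br k \<Longrightarrow> T a \<in> lower_series scale n mult br (Suc k)"
  shows "nilpotent_op T"
proof -
  obtain s where s: "lower_series scale n mult br s = {0}" using assms(1) by (auto simp: pn_nilpotent_def)
  have "(T ^^ k) z \<in> lower_series scale n mult br k" for k z
    by (induct k) (simp_all add: assms(2) del: lower_series.simps(2))
  then have "(T ^^ s) = (\<lambda>_. 0)" using s by (auto simp: fun_eq_iff)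
  then show ?thesis unfolding nilpotent_op_def by blast
qed

locale poisson_nlie_space = endo_space scale Basis
  for scale :: "'k::field \<Rightarrow> 'v::ab_group_add \<Rightarrow> 'v" and Basis :: "'v set" +
  fixes n :: nat and mult :: "'v \<Rightarrow> 'v \<Rightarrow> 'v" and br :: "(nat \<Rightarrow> 'v) \<Rightarrow> 'v"
  assumes poisson: "poisson_nlie scale n mult br"
begin

lemma n_ge_2: "2 \<le> n"
  using poisson by (simp add: poisson_nlie_def)

lemma mult_End: "mult x \<in> End"
  using poisson by (simp add: poisson_nlie_def End_def)

lemma mult_commute: "mult x y = mult y x"
  using poisson by (simp add: poisson_nlie_def)

lemma mult_assoc: "mult (mult x y) z = mult x (mult y z)"
  using poisson unfolding poisson_nlie_def by blast

lemma br_slot_End: "i < n \<Longrightarrow> (\<lambda>x. br (f(i := x))) \<in> End"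
  using poisson by (simp add: poisson_nlie_def End_def)

lemma br_swap: "i < j \<Longrightarrow> j < n \<Longrightarrow> br (f(i := f j, j := f i)) = - br f"
  using poisson by (simp add: poisson_nlie_def)

lemma fundamental_identity: "br (x(n - 1 := br y)) = (\<Sum>i<n. br (y(i := br (x(n - 1 := y i)))))"
  using poisson unfolding poisson_nlie_def by blast

lemma leibniz: "br (f(0 := mult y z)) = mult y (br (f(0 := z))) + mult z (br (f(0 := y)))"
  using poisson unfolding poisson_nlie_def by blast

lemma mult_zero_left: "mult 0 = 0"
  and mult_add_left: "mult (a + b) = mult a + mult b"
  and mult_scale_left: "mult (scale c a) = fscale c (mult a)"
  by (simp_all add: fun_eq_iff fscale_apply mult_commute[of _ x for x] End_0 End_add End_scale mult_End)

text \<open>\<open>Q f\<close> is \<open>Q\<^sub>y\<close> for \<open>y = f 0 \<and> \<dots> \<and> f (n - 2)\<close>; the entry \<open>f (n - 1)\<close> is ignored.\<close>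
definition Q :: "(nat \<Rightarrow> 'v) \<Rightarrow> 'v \<Rightarrow> 'v" where
  "Q f z = br (f(n - 1 := z))"

lemma Q_End: "Q f \<in> End"
  using br_slot_End[of "n - 1" f] n_ge_2 by (simp add: Q_def[abs_def])

lemma br_swap_first_last: "br (f(0 := a, n - 1 := b)) = - br (f(0 := b, n - 1 := a))"
proof -
  have "0 < n - 1" "n - 1 < n" using n_ge_2 by simp_all
  then have "br ((f(0 := b, n - 1 := a))(0 := a, n - 1 := b)) = - br (f(0 := b, n - 1 := a))"
    using br_swap[of 0 "n - 1" "f(0 := b, n - 1 := a)"] by simp
  then show ?thesis by simp
qed

lemma br_upd_first: "br (f(0 := a)) = - Q (f(0 := f (n - 1))) a"
proof -
  have "0 \<noteq> n - 1" using n_ge_2 by simp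
  then have "f(0 := a, n - 1 := f (n - 1)) = f(0 := a)" by (simp add: fun_eq_iff)
  then show ?thesis using br_swap_first_last[of f a "f (n - 1)"] by (simp add: Q_def)
qed

lemma Q_eq_br_upd_first: "Q f a = - br ((f(n - 1 := f 0))(0 := a))"
proof -
  have "0 \<noteq> n - 1" using n_ge_2 by simp
  then show ?thesis
    using br_swap_first_last[of f "f 0" a] by (simp add: Q_def fun_upd_twist)
qed

lemma Q_leibniz: "Q f (mult y z) = mult y (Q f z) + mult z (Q f y)"
  unfolding Q_eq_br_upd_first leibniz by (simp add: End_neg[OF mult_End])

lemma commutator_Q_Q: "commutator (Q x) (Q y) = (\<Sum>i<n - 1. Q (y(i := Q x (y i))))"
proof (rule ext)
  fix z
  define y' where "y' = y(n - 1 := z)"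
  have n: "{..<n} = insert (n - 1) {..<n - 1}" using n_ge_2 by auto
  have "Q x (Q y z) = (\<Sum>i<n. br (y'(i := br (x(n - 1 := y' i)))))"
    unfolding Q_def y'_def[symmetric] by (rule fundamental_identity)
  also have "\<dots> = Q y (Q x z) + (\<Sum>i<n - 1. br (y'(i := br (x(n - 1 := y' i)))))"
    by (simp add: n y'_def Q_def)
  also have "(\<Sum>i<n - 1. br (y'(i := br (x(n - 1 := y' i))))) = (\<Sum>i<n - 1. Q (y(i := Q x (y i))) z)"
    by (intro sum.cong) (auto simp: y'_def Q_def fun_upd_twist)
  finally show "commutator (Q x) (Q y) z = (\<Sum>i<n - 1. Q (y(i := Q x (y i)))) z"
    by (simp add: commutator_apply sum_fun_apply)
qed


definition LP :: "('v \<Rightarrow> 'v) set" where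
  "LP = range mult"

definition LQ :: "('v \<Rightarrow> 'v) set" where
  "LQ = F.span (range Q)"

lemma lie_subalgebra_LP: "lie_subalgebra LP"
  unfolding lie_subalgebra_def
proof (intro conjI ballI)
  show "LP \<subseteq> End" using mult_End by (auto simp: LP_def)
  show "F.subspace LP"
    unfolding F.subspace_def LP_def
    by (auto simp: mult_zero_left[symmetric] mult_add_left[symmetric] mult_scale_left[symmetric])
  fix A B assume "A \<in> LP" "B \<in> LP"
  then obtain a b where "A = mult a" "B = mult b" by (auto simp: LP_def)
  then have "commutator A B = mult 0"
    by (simp add: fun_eq_iff commutator_apply mult_zero_left mult_assoc[symmetric] mult_commute[of a b])
  then show "commutator A B \<in> LP" by (simp add: LP_def)
qed

lemma lie_subalgebra_LQ: "lie_subalgebra LQ"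
  unfolding LQ_def
proof (rule lie_subalgebra_span)
  show "range Q \<subseteq> End" using Q_End by blast
  fix A B assume "A \<in> range Q" "B \<in> range Q"
  then obtain x y where "A = Q x" "B = Q y" by blast
  moreover have "(\<Sum>i<n - 1. Q (y(i := Q x (y i)))) \<in> F.span (range Q)"
    by (intro F.span_sum F.span_base rangeI)
  ultimately show "commutator A B \<in> F.span (range Q)" by (simp add: commutator_Q_Q)
qed

lemma LQ_sum_form:
  assumes "A \<in> LQ"
  shows "\<exists>(m::nat) c Y. A = (\<lambda>z. \<Sum>j<m. scale (c j) (Q (Y j) z))"
  using assms unfolding LQ_def
proof (induct rule: F.span_induct_alt)
  case base
  show ?case by (rule exI[of _ 0]) (simp add: fun_eq_iff)
next
  case (step c x A)
  obtain f where x: "x = Q f" using \<open>x \<in> range Q\<close> by blast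
  obtain m d Y where A: "A = (\<lambda>z. \<Sum>j<(m::nat). scale (d j) (Q (Y j) z))" using step.hyps(2) by blast
  have "fscale c x + A = (\<lambda>z. \<Sum>j<Suc m. scale ((d(m := c)) j) (Q ((Y(m := f)) j) z))"
    by (simp add: fun_eq_iff x A fscale_apply add.commute)
  then show ?case by blast
qed

lemma commutator_LQ_mult:
  assumes "A \<in> LQ"
  shows "commutator A (mult y) = mult (A y)"
proof -
  have "F.subspace {A \<in> End. \<forall>y. commutator A (mult y) = mult (A y)}"
    unfolding F.subspace_def
    by (simp add: F.subspace_0[OF subspace_End] F.subspace_add[OF subspace_End] F.subspace_scale[OF subspace_End]
        commutator_zero_left[OF mult_End] commutator_add_left[OF mult_End] commutator_scale_left[OF mult_End]
        mult_zero_left mult_add_left mult_scale_left fscale_apply)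
  moreover have "Q f \<in> {A \<in> End. \<forall>y. commutator A (mult y) = mult (A y)}" for f
    by (simp add: Q_End fun_eq_iff commutator_apply Q_leibniz mult_commute[of _ "Q f y" for y])
  ultimately show ?thesis
    using F.span_induct[of A "range Q"] assms unfolding LQ_def by blast
qed

lemma lower_series_subset_upper_series:
  assumes S: "LP \<union> LQ \<subseteq> S" "S \<subseteq> End" and full: "upper_series S d = UNIV" and "k \<le> d"
  shows "lower_series scale n mult br k \<subseteq> upper_series S (d - k)"
  using \<open>k \<le> d\<close>
proof (induct k)
  case 0
  then show ?case using full by simp
next
  case (Suc k)
  then have IH: "lower_series scale n mult br k \<subseteq> upper_series S (Suc (d - Suc k))"
    by (simp add: Suc_diff_Suc)
  have "br (f(0 := a)) \<in> upper_series S (d - Suc k)" if "a \<in> lower_series scale n mult br k" for a f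
  proof -
    have "Q (f(0 := f (n - 1))) \<in> S" using S(1) F.span_base by (auto simp: LQ_def)
    then show ?thesis
      using IH that subspace_neg[OF subspace_upper_series[OF S(2)]] by (auto simp: br_upd_first)
  qed
  moreover have "mult a b \<in> upper_series S (d - Suc k)" if "a \<in> lower_series scale n mult br k" for a b
  proof -
    have "mult b \<in> S" using S(1) by (auto simp: LP_def)
    then show ?thesis using IH that mult_commute[of a b] by auto
  qed
  ultimately show ?case
    unfolding lower_series.simps by (intro span_minimal subspace_upper_series[OF S(2)]) blast
qed

lemma pn_nilpotent_if_nilpotent_operators:
  assumes mult_nil: "\<forall>x. nilpotent_op (mult x)"
    and Q_nil: "\<forall>(m::nat) (c::nat \<Rightarrow> 'k) (Y::nat \<Rightarrow> nat \<Rightarrow> 'v).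
      nilpotent_op (\<lambda>z. \<Sum>j<m. scale (c j) (br ((Y j)(n - 1 := z))))"
  shows "pn_nilpotent scale n mult br"
proof -
  have "\<forall>A\<in>LP. nilpotent_op A" using mult_nil by (auto simp: LP_def)
  then have engel_LP: "EV.engel_property LP" using engel[OF lie_subalgebra_LP] by blast
  have "nilpotent_op A" if A: "A \<in> LQ" for A
  proof -
    obtain m c Y where "A = (\<lambda>z. \<Sum>j<(m::nat). scale (c j) (Q (Y j) z))" using LQ_sum_form[OF A] by blast
    then show ?thesis using Q_nil by (simp add: Q_def)
  qed
  then have engel_LQ: "EV.engel_property LQ" using engel[OF lie_subalgebra_LQ] by blast
  have "commutator B A \<in> LP" if "A \<in> LP" "B \<in> LQ" for A B
    using that commutator_LQ_mult by (auto simp: LP_def)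
  moreover have ends: "LP \<subseteq> End" "LQ \<subseteq> End"
    using lie_subalgebra_LP lie_subalgebra_LQ by (simp_all add: lie_subalgebra_def)
  ultimately have "EV.engel_property (LP \<union> LQ)"
    using EV.engel_property_union[OF ends engel_LP engel_LQ] by blast
  moreover have "LP \<union> LQ \<subseteq> End" using ends by blast
  ultimately have "upper_series (LP \<union> LQ) dimension = UNIV" by (rule upper_series_eq_UNIV[rotated])
  then have "lower_series scale n mult br dimension \<subseteq> {0}"
    using lower_series_subset_upper_series[OF subset_refl \<open>LP \<union> LQ \<subseteq> End\<close>] by fastforce
  moreover have "0 \<in> lower_series scale n mult br dimension"
    by (cases dimension) (simp_all add: span_zero)
  ultimately show ?thesis unfolding pn_nilpotent_def by blast
qed

lemma Q_shifts_lower_series: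
  "a \<in> lower_series scale n mult br k \<Longrightarrow> Q f a \<in> lower_series scale n mult br (Suc k)"
  unfolding Q_eq_br_upd_first lower_series.simps by (intro span_neg span_base) blast

lemma nilpotent_operators_if_pn_nilpotent:
  assumes "pn_nilpotent scale n mult br"
  shows "(\<forall>x. nilpotent_op (mult x)) \<and>
    (\<forall>(m::nat) (c::nat \<Rightarrow> 'k) (Y::nat \<Rightarrow> nat \<Rightarrow> 'v).
      nilpotent_op (\<lambda>z. \<Sum>j<m. scale (c j) (br ((Y j)(n - 1 := z)))))"
proof (intro conjI allI)
  fix x
  show "nilpotent_op (mult x)"
  proof (rule nilpotent_op_if_shifts_lower_series[OF assms])
    fix k a assume "a \<in> lower_series scale n mult br k"
    then show "mult x a \<in> lower_series scale n mult br (Suc k)"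
      unfolding lower_series.simps mult_commute[of x] by (intro span_base) blast
  qed
next
  fix m :: nat and c :: "nat \<Rightarrow> 'k" and Y :: "nat \<Rightarrow> nat \<Rightarrow> 'v"
  show "nilpotent_op (\<lambda>z. \<Sum>j<m. scale (c j) (br ((Y j)(n - 1 := z))))"
  proof (rule nilpotent_op_if_shifts_lower_series[OF assms])
    fix k a assume "a \<in> lower_series scale n mult br k"
    then have "br ((Y j)(n - 1 := a)) \<in> lower_series scale n mult br (Suc k)" for j
      using Q_shifts_lower_series by (simp add: Q_def)
    then show "(\<Sum>j<m. scale (c j) (br ((Y j)(n - 1 := a)))) \<in> lower_series scale n mult br (Suc k)"
      unfolding lower_series.simps(2) by (intro span_sum span_scale)
  qed
qed

end

lemma (in vector_space) finite_dimensional_if_finite_span: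
  assumes "finite B" and "span B = UNIV"
  obtains Basis where "finite_dimensional_vector_space scale Basis"
proof -
  obtain Basis where "independent Basis" "UNIV \<subseteq> span Basis" using basis_exists[of UNIV] by blast
  moreover have "finite Basis" using independent_span_bound[OF assms(1) \<open>independent Basis\<close>] assms(2) by blast
  ultimately show ?thesis
    by (intro that[of Basis]) (auto simp: finite_dimensional_vector_space_def
        finite_dimensional_vector_space_axioms_def vector_space_axioms)
qed

theorem theorem5p5:
  fixes scale :: "'k::field \<Rightarrow> 'v::ab_group_add \<Rightarrow> 'v"
    and n :: nat and mult :: "'v \<Rightarrow> 'v \<Rightarrow> 'v" and br :: "(nat \<Rightarrow> 'v) \<Rightarrow> 'v"
  assumes "poisson_nlie scale n mult br"
    and "\<exists>B. finite B \<and> module.span scale B = UNIV"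
  shows "pn_nilpotent scale n mult br \<longleftrightarrow>
         ((\<forall>x. nilpotent_op (mult x)) \<and>
          (\<forall>(m::nat) (c::nat \<Rightarrow> 'k) (Y::nat \<Rightarrow> nat \<Rightarrow> 'v).
             nilpotent_op (\<lambda>z. \<Sum>j<m. scale (c j) (br ((Y j)(n - 1 := z))))))"
proof -
  interpret vector_space scale using assms(1) by (simp add: poisson_nlie_def)
  obtain Basis where "finite_dimensional_vector_space scale Basis"
    using finite_dimensional_if_finite_span assms(2) by blast
  then interpret poisson_nlie_space scale Basis n mult br
    using assms(1) by (simp add: poisson_nlie_space_def poisson_nlie_space_axioms_def endo_space_def)
  show ?thesis
    using pn_nilpotent_if_nilpotent_operators nilpotent_operators_if_pn_nilpotent by blast
qed

end
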